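(* Let $(R_1,R_2,\ldots,R_h)$, $h\ge 2$, be rows whose overlap graph is the path $R_1-R_2-\cdots-R_h$ (i.e., $R_i$ and $R_j$ overlap if and only if $|i-j|=1$). For $1\le i\le h-1$ let $\mathcal A_i=\{R_i\setminus R_{i+1},\ R_i\cap R_{i+1},\ R_{i+1}\setminus R_i\}$ and $\mathcal A=\bigcup_{i=1}^{h-1}\mathcal A_i$. Let $C\subseteq \bigcup_{i=1}^h R_i$ be a set of columns. Then the overlap graph of the family $(R_1\cap C,\ldots,R_h\cap C)$ is connected if and only if every member of $\mathcal A$ contains an element of $C$.
   Context: Each row is identified with the set of columns in which it has a 1. Two rows (sets) overlap if their intersection is nonempty and neither is a subset of the other; the overlap graph of an indexed family of rows has one vertex per index and joins two indices when the corresponding rows overlap. *)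

theory Defs
  imports Main
begin

definition overlap :: "'a set \<Rightarrow> 'a set \<Rightarrow> bool" where
  "overlap A B \<longleftrightarrow> A \<inter> B \<noteq> {} \<and> \<not> A \<subseteq> B \<and> \<not> B \<subseteq> A"

definition overlap_edges :: "'i set \<Rightarrow> ('i \<Rightarrow> 'a set) \<Rightarrow> ('i \<times> 'i) set" where
  "overlap_edges I R = {(i, j). i \<in> I \<and> j \<in> I \<and> overlap (R i) (R j)}"

definition overlap_graph_connected :: "'i set \<Rightarrow> ('i \<Rightarrow> 'a set) \<Rightarrow> bool" where
  "overlap_graph_connected I R \<longleftrightarrow> (\<forall>i\<in>I. \<forall>j\<in>I. (i, j) \<in> (overlap_edges I R)\<^sup>*)"

end

theory Submission
  imports Defs
begin

text \<open>Restricting two rows to a set C of columns keeps them overlapping exactly when C meets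
  each of the three parts A - B, A \<inter> B, B - A. Since the hypothesis forces the overlap graph
  of the restricted rows to be a subgraph of the path 1 - 2 - ... - h, it is connected iff it
  contains every edge (i, i + 1) of the path, i.e. iff C meets every member of the family.
  Neither h \<ge> 2 nor C \<subseteq> \<Union>i. R i is needed.\<close>

lemma overlap_sym: "overlap A B \<longleftrightarrow> overlap B A"
  unfolding overlap_def by blast

lemma overlap_Int_imp_overlap: "overlap (A \<inter> C) (B \<inter> C) \<Longrightarrow> overlap A B"
  unfolding overlap_def by blast

lemma overlap_Int_iff:
  "overlap (A \<inter> C) (B \<inter> C) \<longleftrightarrow>
     (A - B) \<inter> C \<noteq> {} \<and> (A \<inter> B) \<inter> C \<noteq> {} \<and> (B - A) \<inter> C \<noteq> {}"
  unfolding overlap_def by blast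

lemma sym_overlap_edges: "sym (overlap_edges I R)"
  unfolding overlap_edges_def sym_def by (auto simp: overlap_sym)

lemma rtrancl_consecutive_crosses:
  fixes E :: "(nat \<times> nat) set"
  assumes consecutive: "\<And>y z. (y, z) \<in> E \<Longrightarrow> z = Suc y \<or> y = Suc z"
    and walk: "(a, b) \<in> E\<^sup>*" and "a \<le> i" "i < b"
  shows "(i, Suc i) \<in> E \<or> (Suc i, i) \<in> E"
proof (rule ccontr)
  assume no_crossing: "\<not> ((i, Suc i) \<in> E \<or> (Suc i, i) \<in> E)"
  have "x \<le> i" if "(a, x) \<in> E\<^sup>*" for x
    using that
  proof (induction rule: rtrancl_induct)
    case base
    show ?case using \<open>a \<le> i\<close> .
  next
    case (step y z)
    then show ?case using consecutive[OF step(2)] no_crossing by (cases "y = i") auto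
  qed
  with walk \<open>i < b\<close> show False by fastforce
qed

lemma rtrancl_consecutive_chain:
  fixes E :: "(nat \<times> nat) set"
  assumes "sym E" and chain: "\<And>k. m \<le> k \<Longrightarrow> k < n \<Longrightarrow> (k, Suc k) \<in> E"
    and "i \<in> {m..n}" "j \<in> {m..n}"
  shows "(i, j) \<in> E\<^sup>*"
proof -
  have up: "(i, j) \<in> E\<^sup>*" if "m \<le> i" "i \<le> j" "j \<le> n" for i j
    using that
  proof (induction j)
    case 0
    then show ?case by simp
  next
    case (Suc j)
    show ?case
    proof (cases "i = Suc j")
      case False
      with Suc.prems have "(i, j) \<in> E\<^sup>*" "(j, Suc j) \<in> E"
        using Suc.IH chain by auto
      then show ?thesis by (rule rtrancl_into_rtrancl)
    qed simp
  qed
  have "sym (E\<^sup>*)"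
    using \<open>sym E\<close> by (rule sym_rtrancl)
  then show ?thesis
    using up[of i j] up[of j i] assms(3,4) by (cases "i \<le> j") (auto dest: symD)
qed

lemma overlap_graph_connected_path_iff:
  fixes S :: "nat \<Rightarrow> 'a set"
  assumes path: "\<forall>i\<in>{1..h}. \<forall>j\<in>{1..h}. overlap (S i) (S j) \<longrightarrow> (i = j + 1 \<or> j = i + 1)"
  shows "overlap_graph_connected {1..h} S \<longleftrightarrow> (\<forall>i\<in>{1..h-1}. overlap (S i) (S (i + 1)))"
proof
  let ?E = "overlap_edges {1..h} S"
  assume connected: "overlap_graph_connected {1..h} S"
  show "\<forall>i\<in>{1..h-1}. overlap (S i) (S (i + 1))"
  proof
    fix i assume "i \<in> {1..h-1}"
    have "z = Suc y \<or> y = Suc z" if "(y, z) \<in> ?E" for y z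
      using that path unfolding overlap_edges_def by fastforce
    moreover have "(1, h) \<in> ?E\<^sup>*"
      using connected \<open>i \<in> {1..h-1}\<close> unfolding overlap_graph_connected_def by auto
    moreover have "1 \<le> i" "i < h"
      using \<open>i \<in> {1..h-1}\<close> by auto
    ultimately have "(i, Suc i) \<in> ?E \<or> (Suc i, i) \<in> ?E"
      by (rule rtrancl_consecutive_crosses)
    then show "overlap (S i) (S (i + 1))"
      unfolding overlap_edges_def by (auto simp: overlap_sym)
  qed
next
  assume "\<forall>i\<in>{1..h-1}. overlap (S i) (S (i + 1))"
  then have "(k, Suc k) \<in> overlap_edges {1..h} S" if "1 \<le> k" "k < h" for k
    using that unfolding overlap_edges_def by auto
  then show "overlap_graph_connected {1..h} S"
    unfolding overlap_graph_connected_def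
    using rtrancl_consecutive_chain[OF sym_overlap_edges] by blast
qed

theorem mainTheorem10:
  fixes R :: "nat \<Rightarrow> 'a set" and h :: nat and C :: "'a set"
  assumes "h \<ge> 2"
    and "\<forall>i\<in>{1..h}. \<forall>j\<in>{1..h}. overlap (R i) (R j) \<longleftrightarrow> (i = j + 1 \<or> j = i + 1)"
    and "C \<subseteq> (\<Union>i\<in>{1..h}. R i)"
  shows "overlap_graph_connected {1..h} (\<lambda>i. R i \<inter> C) \<longleftrightarrow>
    (\<forall>A \<in> (\<Union>i\<in>{1..h-1}. {R i - R (i+1), R i \<inter> R (i+1), R (i+1) - R i}). A \<inter> C \<noteq> {})"
proof -
  have "\<forall>i\<in>{1..h}. \<forall>j\<in>{1..h}. overlap (R i \<inter> C) (R j \<inter> C) \<longrightarrow> (i = j + 1 \<or> j = i + 1)"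
    using assms(2) overlap_Int_imp_overlap by blast
  then have "overlap_graph_connected {1..h} (\<lambda>i. R i \<inter> C) \<longleftrightarrow>
      (\<forall>i\<in>{1..h-1}. overlap (R i \<inter> C) (R (i + 1) \<inter> C))"
    by (rule overlap_graph_connected_path_iff)
  also have "\<dots> \<longleftrightarrow>
      (\<forall>A \<in> (\<Union>i\<in>{1..h-1}. {R i - R (i+1), R i \<inter> R (i+1), R (i+1) - R i}). A \<inter> C \<noteq> {})"
    unfolding overlap_Int_iff by blast
  finally show ?thesis .
qed

end
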